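(* Consider a Bayesian neural network with $L$ layers, input $\mathbf{h}^{(0)}=\mathbf{x}$, hidden variables $\mathbf{h}^{(1)},\dots,\mathbf{h}^{(L-1)}$, output $\mathbf{h}^{(L)}=\mathbf{y}$, and model parameters $\boldsymbol{\theta}=(\boldsymbol{\theta}^{(0)},\dots,\boldsymbol{\theta}^{(L-1)})$. Assume: (i) the approximate posterior over the parameters factorizes over layers, $Q(\boldsymbol{\theta};\phi)=\prod_{l=0}^{L-1}Q(\boldsymbol{\theta}^{(l)};\phi^{(l)})$; (ii) the hidden variables are Markovian, $\Pr[\mathbf{h}^{(l+1)}\mid \mathbf{h}^{(0)},\dots,\mathbf{h}^{(l)},\boldsymbol{\theta}^{(0)},\dots,\boldsymbol{\theta}^{(l)}]=\Pr[\mathbf{h}^{(l+1)}\mid \mathbf{h}^{(l)},\boldsymbol{\theta}^{(l)}]$ for all $l$. Fix a data point $(x_n,y_n)$ and define $$\mathcal{L}_n(\phi)=\mathbb{E}_{\boldsymbol{\theta}\sim Q(\cdot;\phi)}\big[\log \Pr[y_n\mid x_n,\boldsymbol{\theta}]\big],$$ where $\Pr[y_n\mid x_n,\theta]=\int \Pr[y_n\mid h^{(L-1)},\theta^{(L-1)}]\,\Pr[h^{(L-1)}\mid x_n,\theta^{(0:L-2)}]\,dh^{(L-1)}$. Let $P(h^{(L-1)})=\Pr[h^{(L-1)}\mid x_n]=\int \Pr[h^{(L-1)}\mid x_n,\theta^{(0:L-2)}]\prod_{l=0}^{L-2}Q(\theta^{(l)};\phi^{(l)})\,d\theta^{(0:L-2)}$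 be the predictive distribution of $\mathbf{h}^{(L-1)}$ given $x_n$, and define $$\overline{\mathcal{L}}_n(\phi)=\mathbb{E}_{\mathbf{h}^{(L-1)}\sim P;\ \boldsymbol{\theta}^{(L-1)}\sim Q(\cdot;\phi^{(L-1)})}\big[\log \Pr[y_n\mid \mathbf{h}^{(L-1)},\boldsymbol{\theta}^{(L-1)}]\big],$$ with $\mathbf{h}^{(L-1)}$ and $\boldsymbol{\theta}^{(L-1)}$ drawn independently. Then $\overline{\mathcal{L}}_n(\phi)\le \mathcal{L}_n(\phi)$. Moreover, equality $\overline{\mathcal{L}}_n(\phi)=\mathcal{L}_n(\phi)$ holds if $\mathbf{h}^{(L-1)}$ is deterministic given the input $x_n$ and the parameters $\theta^{(0:L-2)}$ of all layers before the last.
   Context: Notation: $\theta^{(0:L-2)}$ denotes $(\theta^{(0)},\dots,\theta^{(L-2)})$. All expectations/integrals are assumed well defined (integrals become sums for discrete variables). $\mathcal{L}_n(\phi)$ is the expected log-likelihood term of the evidence lower bound for variational Bayesian learning. *)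

theory Defs
  imports "HOL-Probability.Probability"
begin

text \<open>Layers: hidden variable h^(l) lives in the measurable space S l (carried by a
common type 'h); the parameters theta^(l) of layer l live in the space of Q l, where
Q l = Q(.;phi^(l)) is the (fixed-phi) approximate posterior factor of layer l.
T l h p is the conditional distribution Pr[h^(l+1) | h^(l) = h, theta^(l) = p].\<close>

text \<open>Pr[h^(l) | x, theta^(0:l-1)], obtained from the Markov chain of layer transitions.\<close>
fun hidden :: "(nat \<Rightarrow> 'h measure) \<Rightarrow> (nat \<Rightarrow> 'h \<Rightarrow> 'p \<Rightarrow> 'h measure) \<Rightarrow> 'h \<Rightarrow> nat
                \<Rightarrow> (nat \<Rightarrow> 'p) \<Rightarrow> 'h measure" where
  "hidden S T x 0 \<theta> = return (S 0) x"
| "hidden S T x (Suc l) \<theta> = bind (hidden S T x l \<theta>) (\<lambda>h. T l h (\<theta> l))"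

text \<open>Pr[y_n | x_n, theta] = integral of Pr[y_n | h^(L-1), theta^(L-1)] against
Pr[h^(L-1) | x_n, theta^(0:L-2)]; lik h p stands for Pr[y_n | h^(L-1) = h, theta^(L-1) = p].\<close>
definition pred_lik :: "(nat \<Rightarrow> 'h measure) \<Rightarrow> (nat \<Rightarrow> 'h \<Rightarrow> 'p \<Rightarrow> 'h measure) \<Rightarrow> 'h \<Rightarrow> nat
                \<Rightarrow> ('h \<Rightarrow> 'p \<Rightarrow> real) \<Rightarrow> (nat \<Rightarrow> 'p) \<Rightarrow> real" where
  "pred_lik S T x L lik \<theta> = (\<integral>h. lik h (\<theta> (L - 1)) \<partial>(hidden S T x (L - 1) \<theta>))"

definition ell :: "(nat \<Rightarrow> 'p measure) \<Rightarrow> (nat \<Rightarrow> 'h measure) \<Rightarrow> (nat \<Rightarrow> 'h \<Rightarrow> 'p \<Rightarrow> 'h measure)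
                \<Rightarrow> 'h \<Rightarrow> nat \<Rightarrow> ('h \<Rightarrow> 'p \<Rightarrow> real) \<Rightarrow> real" where
  "ell Q S T x L lik = (\<integral>\<theta>. ln (pred_lik S T x L lik \<theta>) \<partial>(PiM {..<L} Q))"

definition hidden_pred :: "(nat \<Rightarrow> 'p measure) \<Rightarrow> (nat \<Rightarrow> 'h measure) \<Rightarrow> (nat \<Rightarrow> 'h \<Rightarrow> 'p \<Rightarrow> 'h measure)
                \<Rightarrow> 'h \<Rightarrow> nat \<Rightarrow> 'h measure" where
  "hidden_pred Q S T x L = bind (PiM {..<L - 1} Q) (\<lambda>\<theta>. hidden S T x (L - 1) \<theta>)"

definition ell_bar :: "(nat \<Rightarrow> 'p measure) \<Rightarrow> (nat \<Rightarrow> 'h measure) \<Rightarrow> (nat \<Rightarrow> 'h \<Rightarrow> 'p \<Rightarrow> 'h measure)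
                \<Rightarrow> 'h \<Rightarrow> nat \<Rightarrow> ('h \<Rightarrow> 'p \<Rightarrow> real) \<Rightarrow> real" where
  "ell_bar Q S T x L lik =
     (\<integral>z. ln (lik (fst z) (snd z)) \<partial>(hidden_pred Q S T x L \<Otimes>\<^sub>M Q (L - 1)))"

end

theory Submission
  imports Defs
begin

text \<open>Given the parameters of all layers but the last, the law \<open>H \<theta>\<close> of the last hidden
layer is a probability kernel, and the predictive distribution \<open>P\<close> is its mixture \<open>bind A H\<close>.
Fubini's theorem, for the kernel and for the product with the last layer's parameters \<open>p\<close>,
writes both objectives as iterated integrals over \<open>\<theta>\<close> and \<open>p\<close>. The innermost integrands
are then \<open>E[ln lik h p]\<close> and \<open>ln E[lik h p]\<close> for \<open>h\<close> drawn from \<open>H \<theta>\<close>, which Jensen's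
inequality for the concave logarithm compares pointwise; they coincide when \<open>H \<theta>\<close> is a point
mass.\<close>

lemma
  fixes f :: "'b \<Rightarrow> real"
  assumes N[measurable]: "N \<in> M \<rightarrow>\<^sub>M subprob_algebra K" and M: "space M \<noteq> {}"
    and f: "integrable (bind M N) f"
  shows AE_integrable_kernel_bind: "AE x in M. integrable (N x) f"
    and integrable_integral_kernel_bind: "integrable M (\<lambda>x. \<integral>y. f y \<partial>N x)"
proof -
  have f_meas[measurable]: "f \<in> borel_measurable K"
    using f sets_bind_measurable[OF N M] by (auto cong: measurable_cong_sets)
  have "(\<integral>\<^sup>+x. \<integral>\<^sup>+y. norm (f y) \<partial>N x \<partial>M) = (\<integral>\<^sup>+y. norm (f y) \<partial>bind M N)"
    by (rule nn_integral_bind[symmetric]) measurable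
  also have "\<dots> < \<infinity>"
    using f by (simp add: integrable_iff_bounded)
  finally have fin: "(\<integral>\<^sup>+x. \<integral>\<^sup>+y. norm (f y) \<partial>N x \<partial>M) < \<infinity>" .
  then have "AE x in M. (\<integral>\<^sup>+y. norm (f y) \<partial>N x) \<noteq> \<infinity>"
    by (intro nn_integral_PInf_AE) auto
  then show "AE x in M. integrable (N x) f"
    using AE_space by eventually_elim
      (auto intro!: integrableI_bounded simp: top.not_eq_extremum sets_kernel[OF N] cong: measurable_cong_sets)
  have "norm (\<integral>y. f y \<partial>N x) \<le> (\<integral>\<^sup>+y. norm (f y) \<partial>N x)" for x
    using integral_norm_bound_ennreal[of "N x" f]
    by (cases "integrable (N x) f") (auto simp: not_integrable_integral_eq)
  then have "(\<integral>\<^sup>+x. norm (\<integral>y. f y \<partial>N x) \<partial>M) \<le> (\<integral>\<^sup>+x. \<integral>\<^sup>+y. norm (f y) \<partial>N x \<partial>M)"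
    by (intro nn_integral_mono) simp
  then have "(\<integral>\<^sup>+x. norm (\<integral>y. f y \<partial>N x) \<partial>M) < \<infinity>"
    using fin by order
  then show "integrable M (\<lambda>x. \<integral>y. f y \<partial>N x)"
    by (intro integrableI_bounded) measurable
qed

lemma integral_kernel_bind_nonneg:
  fixes f :: "'b \<Rightarrow> real"
  assumes N[measurable]: "N \<in> M \<rightarrow>\<^sub>M subprob_algebra K" and M: "space M \<noteq> {}"
    and f: "integrable (bind M N) f" and f_nonneg: "\<And>y. 0 \<le> f y"
  shows "integral\<^sup>L (bind M N) f = (\<integral>x. \<integral>y. f y \<partial>N x \<partial>M)"
proof -
  have [measurable]: "f \<in> borel_measurable K"
    using f sets_bind_measurable[OF N M] by (auto cong: measurable_cong_sets)
  have "ennreal (integral\<^sup>L (bind M N) f) = (\<integral>\<^sup>+y. f y \<partial>bind M N)"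
    using f f_nonneg by (simp add: nn_integral_eq_integral)
  also have "\<dots> = (\<integral>\<^sup>+x. \<integral>\<^sup>+y. f y \<partial>N x \<partial>M)"
    by (rule nn_integral_bind) measurable
  also have "\<dots> = (\<integral>\<^sup>+x. ennreal (\<integral>y. f y \<partial>N x) \<partial>M)"
    using AE_integrable_kernel_bind[OF N M f]
    by (intro nn_integral_cong_AE) (auto elim!: eventually_mono simp: f_nonneg nn_integral_eq_integral)
  also have "\<dots> = ennreal (\<integral>x. \<integral>y. f y \<partial>N x \<partial>M)"
    using integrable_integral_kernel_bind[OF N M f] f_nonneg by (simp add: nn_integral_eq_integral)
  finally show ?thesis
    using f_nonneg by (simp add: integral_nonneg)
qed

lemma integral_kernel_bind:
  fixes f :: "'b \<Rightarrow> real"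
  assumes N: "N \<in> M \<rightarrow>\<^sub>M subprob_algebra K" and M: "space M \<noteq> {}"
    and f: "integrable (bind M N) f"
  shows "integral\<^sup>L (bind M N) f = (\<integral>x. \<integral>y. f y \<partial>N x \<partial>M)"
proof -
  define fp where "fp y = max (f y) 0" for y
  define fn where "fn y = max (- f y) 0" for y
  have f_eq: "f = (\<lambda>y. fp y - fn y)"
    unfolding fp_def fn_def by auto
  have fp: "integrable (bind M N) fp" and fn: "integrable (bind M N) fn"
    using f unfolding fp_def fn_def by auto
  have "integral\<^sup>L (bind M N) f = integral\<^sup>L (bind M N) fp - integral\<^sup>L (bind M N) fn"
    using fp fn by (simp add: f_eq)
  also have "\<dots> = (\<integral>x. \<integral>y. fp y \<partial>N x \<partial>M) - (\<integral>x. \<integral>y. fn y \<partial>N x \<partial>M)"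
    using fp fn by (simp add: integral_kernel_bind_nonneg[OF N M] fp_def fn_def)
  also have "\<dots> = (\<integral>x. (\<integral>y. fp y \<partial>N x) - (\<integral>y. fn y \<partial>N x) \<partial>M)"
    using integrable_integral_kernel_bind[OF N M fp] integrable_integral_kernel_bind[OF N M fn] by simp
  also have "\<dots> = (\<integral>x. \<integral>y. f y \<partial>N x \<partial>M)"
  proof (rule integral_cong_AE)
    show "AE x in M. (\<integral>y. fp y \<partial>N x) - (\<integral>y. fn y \<partial>N x) = (\<integral>y. f y \<partial>N x)"
      using AE_integrable_kernel_bind[OF N M fp] AE_integrable_kernel_bind[OF N M fn]
      by eventually_elim (simp add: f_eq)
  qed (use integrable_integral_kernel_bind[OF N M fp] integrable_integral_kernel_bind[OF N M fn]
         integrable_integral_kernel_bind[OF N M f] in auto)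
  finally show ?thesis .
qed

lemma pair_measure_bind:
  assumes H[measurable]: "H \<in> A \<rightarrow>\<^sub>M prob_algebra S" and A: "prob_space A" and B: "prob_space B"
  shows "bind A H \<Otimes>\<^sub>M B = bind A (\<lambda>\<theta>. H \<theta> \<Otimes>\<^sub>M B)"
proof (rule pair_measure_eqI)
  interpret B: prob_space B by (rule B)
  have A_space: "A \<in> space (prob_algebra A)" and B_space: "B \<in> space (prob_algebra B)"
    using A B by (simp_all add: space_prob_algebra)
  have HB: "(\<lambda>\<theta>. H \<theta> \<Otimes>\<^sub>M B) \<in> A \<rightarrow>\<^sub>M prob_algebra (S \<Otimes>\<^sub>M B)"
    using measurable_const[OF B_space] by measurable
  have sets_H: "sets (bind A H) = sets S"
    by (rule sets_bind'[OF A_space H])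
  show "sigma_finite_measure (bind A H)"
    by (intro prob_space_imp_sigma_finite prob_space_bind'[OF A_space H])
  show "sigma_finite_measure B"
    by (rule prob_space_imp_sigma_finite[OF B])
  show "sets (bind A H \<Otimes>\<^sub>M B) = sets (bind A (\<lambda>\<theta>. H \<theta> \<Otimes>\<^sub>M B))"
    using sets_bind'[OF A_space HB] sets_pair_measure_cong[OF sets_H refl] by simp
  fix X Y assume X: "X \<in> sets (bind A H)" and Y: "Y \<in> sets B"
  then have X_S: "X \<in> sets S" using sets_H by simp
  have "emeasure (bind A H) X * emeasure B Y = (\<integral>\<^sup>+\<theta>. emeasure (H \<theta>) X * emeasure B Y \<partial>A)"
    using X_S measurable_emeasure_kernel[OF measurable_prob_algebraD[OF H]]
    by (simp add: emeasure_bind_prob_algebra[OF A_space H] nn_integral_multc)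
  also have "\<dots> = (\<integral>\<^sup>+\<theta>. emeasure (H \<theta> \<Otimes>\<^sub>M B) (X \<times> Y) \<partial>A)"
  proof (intro nn_integral_cong)
    fix \<theta> assume "\<theta> \<in> space A"
    then have "sets (H \<theta>) = sets S"
      using measurable_space[OF H] by (simp add: space_prob_algebra)
    then show "emeasure (H \<theta>) X * emeasure B Y = emeasure (H \<theta> \<Otimes>\<^sub>M B) (X \<times> Y)"
      using X_S Y by (simp add: B.emeasure_pair_measure_Times)
  qed
  also have "\<dots> = emeasure (bind A (\<lambda>\<theta>. H \<theta> \<Otimes>\<^sub>M B)) (X \<times> Y)"
    using X_S Y by (intro emeasure_bind_prob_algebra[OF A_space HB, symmetric]) auto
  finally show "emeasure (bind A H) X * emeasure B Y = emeasure (bind A (\<lambda>\<theta>. H \<theta> \<Otimes>\<^sub>M B)) (X \<times> Y)" .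
qed

lemma
  fixes f :: "'a \<times> 'b \<Rightarrow> real"
  assumes H: "H \<in> A \<rightarrow>\<^sub>M prob_algebra S" and A: "prob_space A" and B: "prob_space B"
    and f: "integrable (bind A H \<Otimes>\<^sub>M B) f"
  shows integrable_integral_bind_pair_measure: "integrable A (\<lambda>\<theta>. integral\<^sup>L (H \<theta> \<Otimes>\<^sub>M B) f)"
    and integral_bind_pair_measure:
      "integral\<^sup>L (bind A H \<Otimes>\<^sub>M B) f = (\<integral>\<theta>. integral\<^sup>L (H \<theta> \<Otimes>\<^sub>M B) f \<partial>A)"
    and AE_Fubini_bind_pair_measure: "AE \<theta> in A.
      integral\<^sup>L (H \<theta> \<Otimes>\<^sub>M B) f = (\<integral>p. \<integral>h. f (h, p) \<partial>H \<theta> \<partial>B) \<and>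
      integrable B (\<lambda>p. \<integral>h. f (h, p) \<partial>H \<theta>) \<and> (AE p in B. integrable (H \<theta>) (\<lambda>h. f (h, p)))"
proof -
  have B_space: "B \<in> space (prob_algebra B)"
    using B by (simp add: space_prob_algebra)
  have HB: "(\<lambda>\<theta>. H \<theta> \<Otimes>\<^sub>M B) \<in> A \<rightarrow>\<^sub>M subprob_algebra (S \<Otimes>\<^sub>M B)"
    using B_space by (intro measurable_prob_algebraD measurable_pair_prob H measurable_const)
  have A_ne: "space A \<noteq> {}"
    using A by (rule prob_space.not_empty)
  have f': "integrable (bind A (\<lambda>\<theta>. H \<theta> \<Otimes>\<^sub>M B)) f"
    using f by (simp add: pair_measure_bind[OF H A B])
  show "integrable A (\<lambda>\<theta>. integral\<^sup>L (H \<theta> \<Otimes>\<^sub>M B) f)"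
    by (rule integrable_integral_kernel_bind[OF HB A_ne f'])
  show "integral\<^sup>L (bind A H \<Otimes>\<^sub>M B) f = (\<integral>\<theta>. integral\<^sup>L (H \<theta> \<Otimes>\<^sub>M B) f \<partial>A)"
    using integral_kernel_bind[OF HB A_ne f'] by (simp add: pair_measure_bind[OF H A B])
  show "AE \<theta> in A.
      integral\<^sup>L (H \<theta> \<Otimes>\<^sub>M B) f = (\<integral>p. \<integral>h. f (h, p) \<partial>H \<theta> \<partial>B) \<and>
      integrable B (\<lambda>p. \<integral>h. f (h, p) \<partial>H \<theta>) \<and> (AE p in B. integrable (H \<theta>) (\<lambda>h. f (h, p)))"
    using AE_integrable_kernel_bind[OF HB A_ne f'] AE_space
  proof eventually_elim
    case (elim \<theta>)
    interpret pair_prob_space "H \<theta>" B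
      using measurable_space[OF H elim(2)] B
      by (simp add: pair_prob_space_def pair_sigma_finite_def space_prob_algebra prob_space_imp_sigma_finite)
    show ?case
      using integral_snd[of "curry f"] integrable_snd[of "curry f"] AE_integrable_snd[of "curry f"] elim(1)
      by simp
  qed
qed

lemma integral_ln_le_ln_integral:
  fixes g :: "'a \<Rightarrow> real"
  assumes M: "prob_space M" and g: "integrable M g" and g_pos: "\<forall>y\<in>space M. 0 < g y"
    and ln_g: "integrable M (\<lambda>y. ln (g y))"
  shows "(\<integral>y. ln (g y) \<partial>M) \<le> ln (\<integral>y. g y \<partial>M)"
proof -
  interpret prob_space M by (rule M)
  have "convex_on {0<..} (\<lambda>t. - ln t)"
    using ln_concave by (simp add: concave_on_def)
  then have "- ln (expectation g) \<le> expectation (\<lambda>y. - ln (g y))"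
    by (intro jensens_inequality[where a=0 and b=0 and I="{0<..}"])
       (use g g_pos ln_g in \<open>auto intro!: AE_I2\<close>)
  then show ?thesis by simp
qed

lemma integral_ln_mixture_le:
  fixes g :: "'a \<Rightarrow> 'b \<Rightarrow> real"
  assumes H: "H \<in> A \<rightarrow>\<^sub>M prob_algebra S" and A: "prob_space A" and B: "prob_space B"
    and g_pos: "\<forall>h\<in>space S. \<forall>p\<in>space B. 0 < g h p"
    and g_int: "\<forall>\<theta>\<in>space A. \<forall>p\<in>space B. integrable (H \<theta>) (\<lambda>h. g h p)"
    and int_mix: "integrable (bind A H \<Otimes>\<^sub>M B) (\<lambda>(h, p). ln (g h p))"
    and int_avg: "integrable (B \<Otimes>\<^sub>M A) (\<lambda>(p, \<theta>). ln (\<integral>h. g h p \<partial>H \<theta>))"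
  shows "(\<integral>(h, p). ln (g h p) \<partial>(bind A H \<Otimes>\<^sub>M B)) \<le> (\<integral>(p, \<theta>). ln (\<integral>h. g h p \<partial>H \<theta>) \<partial>(B \<Otimes>\<^sub>M A))"
proof -
  interpret BA: pair_prob_space B A
    using A B by (simp add: pair_prob_space_def pair_sigma_finite_def prob_space_imp_sigma_finite)
  have "(\<integral>(h, p). ln (g h p) \<partial>(bind A H \<Otimes>\<^sub>M B)) = (\<integral>\<theta>. \<integral>(h, p). ln (g h p) \<partial>(H \<theta> \<Otimes>\<^sub>M B) \<partial>A)"
    by (rule integral_bind_pair_measure[OF H A B int_mix])
  also have "\<dots> \<le> (\<integral>\<theta>. \<integral>p. ln (\<integral>h. g h p \<partial>H \<theta>) \<partial>B \<partial>A)"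
  proof (rule integral_mono_AE)
    show "integrable A (\<lambda>\<theta>. \<integral>(h, p). ln (g h p) \<partial>(H \<theta> \<Otimes>\<^sub>M B))"
      by (rule integrable_integral_bind_pair_measure[OF H A B int_mix])
    show "integrable A (\<lambda>\<theta>. \<integral>p. ln (\<integral>h. g h p \<partial>H \<theta>) \<partial>B)"
      using BA.integrable_snd[OF int_avg] by simp
    show "AE \<theta> in A. (\<integral>(h, p). ln (g h p) \<partial>(H \<theta> \<Otimes>\<^sub>M B)) \<le> (\<integral>p. ln (\<integral>h. g h p \<partial>H \<theta>) \<partial>B)"
      using AE_Fubini_bind_pair_measure[OF H A B int_mix] BA.AE_integrable_snd[OF int_avg] AE_space
    proof eventually_elim
      case (elim \<theta>)
      have H_\<theta>: "prob_space (H \<theta>)" "space (H \<theta>) = space S"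
        using measurable_space[OF H elim(3)] by (auto simp: space_prob_algebra dest: sets_eq_imp_space_eq)
      have "AE p in B. integrable (H \<theta>) (\<lambda>h. ln (g h p))"
        using elim(1) by simp
      then have Jensen: "AE p in B. (\<integral>h. ln (g h p) \<partial>H \<theta>) \<le> ln (\<integral>h. g h p \<partial>H \<theta>)"
        using AE_space
        by eventually_elim (intro integral_ln_le_ln_integral, auto simp: H_\<theta> g_pos g_int elim(3))
      have "(\<integral>p. \<integral>h. ln (g h p) \<partial>H \<theta> \<partial>B) \<le> (\<integral>p. ln (\<integral>h. g h p \<partial>H \<theta>) \<partial>B)"
        using elim(1,2) Jensen by (intro integral_mono_AE) auto
      then show ?case
        using elim(1) by simp
    qed
  qed
  also have "\<dots> = (\<integral>(p, \<theta>). ln (\<integral>h. g h p \<partial>H \<theta>) \<partial>(B \<Otimes>\<^sub>M A))"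
    by (rule BA.integral_snd[OF int_avg])
  finally show ?thesis .
qed

lemma integral_ln_mixture_eq_if_dirac:
  fixes g :: "'a \<Rightarrow> 'b \<Rightarrow> real"
  assumes H: "H \<in> A \<rightarrow>\<^sub>M prob_algebra S" and A: "prob_space A" and B: "prob_space B"
    and g_meas: "(\<lambda>(h, p). g h p) \<in> borel_measurable (S \<Otimes>\<^sub>M B)"
    and dirac: "\<forall>\<theta>\<in>space A. \<exists>h. H \<theta> = return S h"
    and int_mix: "integrable (bind A H \<Otimes>\<^sub>M B) (\<lambda>(h, p). ln (g h p))"
    and int_avg: "integrable (B \<Otimes>\<^sub>M A) (\<lambda>(p, \<theta>). ln (\<integral>h. g h p \<partial>H \<theta>))"
  shows "(\<integral>(h, p). ln (g h p) \<partial>(bind A H \<Otimes>\<^sub>M B)) = (\<integral>(p, \<theta>). ln (\<integral>h. g h p \<partial>H \<theta>) \<partial>(B \<Otimes>\<^sub>M A))"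
proof -
  interpret BA: pair_prob_space B A
    using A B by (simp add: pair_prob_space_def pair_sigma_finite_def prob_space_imp_sigma_finite)
  have "(\<integral>(h, p). ln (g h p) \<partial>(bind A H \<Otimes>\<^sub>M B)) = (\<integral>\<theta>. \<integral>(h, p). ln (g h p) \<partial>(H \<theta> \<Otimes>\<^sub>M B) \<partial>A)"
    by (rule integral_bind_pair_measure[OF H A B int_mix])
  also have "\<dots> = (\<integral>\<theta>. \<integral>p. ln (\<integral>h. g h p \<partial>H \<theta>) \<partial>B \<partial>A)"
  proof (rule integral_cong_AE)
    show "AE \<theta> in A. (\<integral>(h, p). ln (g h p) \<partial>(H \<theta> \<Otimes>\<^sub>M B)) = (\<integral>p. ln (\<integral>h. g h p \<partial>H \<theta>) \<partial>B)"
      using AE_Fubini_bind_pair_measure[OF H A B int_mix] AE_space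
    proof eventually_elim
      case (elim \<theta>)
      obtain h\<^sub>0 where h\<^sub>0: "H \<theta> = return S h\<^sub>0"
        using dirac elim(2) by blast
      have "prob_space (return S h\<^sub>0)"
        using measurable_space[OF H elim(2)] by (simp add: h\<^sub>0 space_prob_algebra)
      then have "h\<^sub>0 \<in> space S"
        using prob_space.emeasure_space_1 by (fastforce simp: emeasure_return split: split_indicator_asm)
      moreover have "(\<lambda>h. g h p) \<in> borel_measurable S" if "p \<in> space B" for p
        using measurable_compose[OF measurable_Pair2'[OF that] g_meas] by simp
      ultimately have "(\<integral>h. ln (g h p) \<partial>H \<theta>) = ln (\<integral>h. g h p \<partial>H \<theta>)" if "p \<in> space B" for p
        using that by (simp add: h\<^sub>0 integral_return)
      then show ?case
        using elim(1) by (simp cong: Bochner_Integration.integral_cong)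
    qed
  qed (use integrable_integral_bind_pair_measure[OF H A B int_mix] BA.integrable_snd[OF int_avg] in auto)
  also have "\<dots> = (\<integral>(p, \<theta>). ln (\<integral>h. g h p \<partial>H \<theta>) \<partial>(B \<Otimes>\<^sub>M A))"
    by (rule BA.integral_snd[OF int_avg])
  finally show ?thesis .
qed

lemma hidden_fun_upd: "k \<le> l \<Longrightarrow> hidden S T x k (\<theta>(l := p)) = hidden S T x k \<theta>"
  by (induction k) auto

lemma measurable_hidden:
  assumes x: "x \<in> space (S 0)"
    and T: "\<forall>l<k. (\<lambda>(h, p). T l h p) \<in> S l \<Otimes>\<^sub>M Q l \<rightarrow>\<^sub>M prob_algebra (S (Suc l))"
    and I: "{..<k} \<subseteq> I"
  shows "hidden S T x k \<in> PiM I Q \<rightarrow>\<^sub>M prob_algebra (S k)"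
  using T I
proof (induction k)
  case 0
  show ?case
    using x by (simp add: space_prob_algebra prob_space_return)
next
  case (Suc k)
  have IH: "hidden S T x k \<in> PiM I Q \<rightarrow>\<^sub>M prob_algebra (S k)"
    using Suc.prems by (intro Suc.IH) auto
  from Suc.prems have k: "k \<in> I"
    and T_k: "(\<lambda>(h, p). T k h p) \<in> S k \<Otimes>\<^sub>M Q k \<rightarrow>\<^sub>M prob_algebra (S (Suc k))"
    by auto
  have "(\<lambda>(\<theta>, h). T k h (\<theta> k)) \<in> PiM I Q \<Otimes>\<^sub>M S k \<rightarrow>\<^sub>M prob_algebra (S (Suc k))"
    using measurable_compose[OF _ T_k, of "\<lambda>(\<theta>, h). (h, \<theta> k)"] k by (simp add: split_beta')
  from measurable_bind_prob_space2[OF IH this] show ?case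
    by simp
qed

lemma
  assumes L: "1 \<le> L" and Q: "\<forall>l<L. prob_space (Q l)"
    and int_ell: "integrable (PiM {..<L} Q) (\<lambda>\<theta>. ln (pred_lik S T x L lik \<theta>))"
  shows integrable_ell_pair_measure: "integrable (Q (L - 1) \<Otimes>\<^sub>M PiM {..<L - 1} Q)
      (\<lambda>(p, \<theta>). ln (\<integral>h. lik h p \<partial>hidden S T x (L - 1) \<theta>))"
    and ell_eq_integral_pair_measure: "ell Q S T x L lik =
      (\<integral>(p, \<theta>). ln (\<integral>h. lik h p \<partial>hidden S T x (L - 1) \<theta>) \<partial>(Q (L - 1) \<Otimes>\<^sub>M PiM {..<L - 1} Q))"
proof -
  let ?upd = "\<lambda>(p, \<theta>). \<theta>(L - 1 := p)"
  have L_eq: "{..<L} = insert (L - 1) {..<L - 1}"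
    using L by auto
  have upd: "?upd \<in> Q (L - 1) \<Otimes>\<^sub>M PiM {..<L - 1} Q \<rightarrow>\<^sub>M PiM {..<L} Q"
    unfolding L_eq by measurable
  have distr: "distr (Q (L - 1) \<Otimes>\<^sub>M PiM {..<L - 1} Q) (PiM {..<L} Q) ?upd = PiM {..<L} Q"
    using distr_pair_PiM_eq_PiM[of "{..<L - 1}" Q "L - 1"] Q L unfolding L_eq by auto
  have pred_upd: "(\<lambda>z. ln (pred_lik S T x L lik (?upd z))) =
      (\<lambda>(p, \<theta>). ln (\<integral>h. lik h p \<partial>hidden S T x (L - 1) \<theta>))"
    by (auto simp: pred_lik_def hidden_fun_upd)
  have F: "(\<lambda>\<theta>. ln (pred_lik S T x L lik \<theta>)) \<in> borel_measurable (PiM {..<L} Q)"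
    using int_ell by auto
  show "integrable (Q (L - 1) \<Otimes>\<^sub>M PiM {..<L - 1} Q) (\<lambda>(p, \<theta>). ln (\<integral>h. lik h p \<partial>hidden S T x (L - 1) \<theta>))"
    using integrable_distr_eq[OF upd F] int_ell unfolding distr pred_upd by simp
  show "ell Q S T x L lik =
      (\<integral>(p, \<theta>). ln (\<integral>h. lik h p \<partial>hidden S T x (L - 1) \<theta>) \<partial>(Q (L - 1) \<Otimes>\<^sub>M PiM {..<L - 1} Q))"
    using integral_distr[OF upd F] unfolding distr pred_upd by (simp add: ell_def)
qed

theorem theorem1:
  fixes Q :: "nat \<Rightarrow> 'p measure" and S :: "nat \<Rightarrow> 'h measure"
    and T :: "nat \<Rightarrow> 'h \<Rightarrow> 'p \<Rightarrow> 'h measure" and x :: 'h and L :: nat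
    and lik :: "'h \<Rightarrow> 'p \<Rightarrow> real"
  assumes L: "1 \<le> L"
    and Q: "\<forall>l<L. prob_space (Q l)"
    and x: "x \<in> space (S 0)"
    and T: "\<forall>l. Suc l < L \<longrightarrow>
              (\<lambda>(h, p). T l h p) \<in> S l \<Otimes>\<^sub>M Q l \<rightarrow>\<^sub>M prob_algebra (S (Suc l))"
    and lik_meas: "(\<lambda>(h, p). lik h p) \<in> borel_measurable (S (L - 1) \<Otimes>\<^sub>M Q (L - 1))"
    and lik_pos: "\<forall>h\<in>space (S (L - 1)). \<forall>p\<in>space (Q (L - 1)). 0 < lik h p"
    and int_pred: "\<forall>\<theta>\<in>space (PiM {..<L} Q).
              integrable (hidden S T x (L - 1) \<theta>) (\<lambda>h. lik h (\<theta> (L - 1)))"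
    and int_ell: "integrable (PiM {..<L} Q) (\<lambda>\<theta>. ln (pred_lik S T x L lik \<theta>))"
    and int_ell_bar: "integrable (hidden_pred Q S T x L \<Otimes>\<^sub>M Q (L - 1))
              (\<lambda>z. ln (lik (fst z) (snd z)))"
  shows "ell_bar Q S T x L lik \<le> ell Q S T x L lik \<and>
         ((\<forall>\<theta>\<in>space (PiM {..<L - 1} Q). \<exists>h. hidden S T x (L - 1) \<theta> = return (S (L - 1)) h)
            \<longrightarrow> ell_bar Q S T x L lik = ell Q S T x L lik)"
proof -
  let ?A = "PiM {..<L - 1} Q" and ?B = "Q (L - 1)" and ?H = "hidden S T x (L - 1)"
  have A: "prob_space ?A"
    using Q by (intro prob_space_PiM) auto
  have B: "prob_space ?B"
    using Q L by auto
  have H: "?H \<in> ?A \<rightarrow>\<^sub>M prob_algebra (S (L - 1))"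
    using T by (intro measurable_hidden[where x = x]) (auto simp: x)
  have lik_int: "\<forall>\<theta>\<in>space ?A. \<forall>p\<in>space ?B. integrable (?H \<theta>) (\<lambda>h. lik h p)"
  proof (intro ballI)
    fix \<theta> p assume "\<theta> \<in> space ?A" "p \<in> space ?B"
    then have "\<theta>(L - 1 := p) \<in> space (PiM {..<L} Q)"
      using L by (auto simp: space_PiM PiE_iff extensional_def)
    then show "integrable (?H \<theta>) (\<lambda>h. lik h p)"
      using int_pred by (auto simp: hidden_fun_upd)
  qed
  have ell_bar: "ell_bar Q S T x L lik = (\<integral>(h, p). ln (lik h p) \<partial>(bind ?A ?H \<Otimes>\<^sub>M ?B))"
    by (simp add: ell_bar_def hidden_pred_def split_beta')
  have int_mix: "integrable (bind ?A ?H \<Otimes>\<^sub>M ?B) (\<lambda>(h, p). ln (lik h p))"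
    using int_ell_bar by (simp add: hidden_pred_def split_beta')
  note int_avg = integrable_ell_pair_measure[OF L Q int_ell]
  show ?thesis
    using integral_ln_mixture_le[OF H A B lik_pos lik_int int_mix int_avg]
      integral_ln_mixture_eq_if_dirac[OF H A B lik_meas _ int_mix int_avg]
    by (simp add: ell_bar ell_eq_integral_pair_measure[OF L Q int_ell])
qed

end
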